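(* Let $F$ be a finite extension of $\mathbb{Q}_p$, $G$ a finite abelian group of odd order, and $h\in\mathrm{Hom}(\Omega_F,G)$ wildly and weakly ramified with $[F^h:F]=p$. Put $L=F^h$, let $\tau$ generate $\mathrm{Gal}(L/F)$, let $\zeta$ be a primitive $p$-th root of unity, let $\alpha'\in A^h$ with $A^h=\mathcal{O}_F\mathrm{Gal}(L/F)\cdot\alpha'$, and $y_i=\sum_{k\in\mathbb{F}_p}\tau^k(\alpha')\zeta^{-ik}$ for $i\in\mathbb F_p$. Let $n\mid p-1$ be such that the image of $\mathrm{Gal}(F(\zeta)/F)$ in $\mathbb F_p^\times$ (via $\omega(\zeta)=\zeta^i$) equals $R_n$, let $d\in\mathbb F_p$ be the class of $(p-1)/n$, and let $\widetilde\tau\in\mathrm{Gal}(L(\zeta)/F(\zeta))$ be the element restricting to $\tau$ on $L$. Then for all $j,k\in\mathbb{F}_p$, \[ \widetilde{\tau}^{j}\Big(\prod_{i\in R_n}y_i^{c(i^{-1}k)}\Big)=\zeta^{jkd}\prod_{i\in R_n}y_i^{c(i^{-1}k)}, \] and consequently, with $\alpha=\frac1p\sum_{k\in\mathbb F_p}\prod_{i\in R_n}y_i^{c(i^{-1}k)}$, for all $j\in\mathbb F_p$, \[ \tau^j(\alpha)=\frac{1}{p}\sum_{k\in\mathbb{F}_p}\Big(\zeta^{jkd}\prod_{i\in R_n}y_i^{c(i^{-1}k)}\Big). \]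
   Context: $F^h$ is the fixed field of $\ker h$ in $F^c$; wildly/weakly ramified refer to $F^h/F$ being wildly ramified / having trivial second lower ramification group. $A^h$ is the square root of the inverse different of $L/F$. Since $[L:F]=p$ and $[F(\zeta):F]$ are coprime, $\mathrm{Gal}(L(\zeta)/F)\cong\mathrm{Gal}(F(\zeta)/F)\times\mathrm{Gal}(L/F)$, so $\widetilde\tau$ is well defined, and $\alpha\in L$. $R_n=(\mathbb F_p^\times)^n$; $i^{-1}$ is the inverse in $\mathbb F_p^\times$; $c(i)$ is the unique integer in $[\frac{1-p}2,\frac{p-1}2]$ representing $i\in\mathbb F_p$; $\zeta^j$ and $\tau^j$ for $j\in\mathbb F_p$ mean powers by any integer representative. *)

theory Defs
  imports "HOL-Number_Theory.Number_Theory"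
begin

definition centred_rep :: "nat \<Rightarrow> int \<Rightarrow> int" where
  "centred_rep p x = (THE r. (1 - int p) div 2 \<le> r \<and> r \<le> (int p - 1) div 2 \<and> [r = x] (mod int p))"

definition fp_div :: "nat \<Rightarrow> nat \<Rightarrow> nat \<Rightarrow> nat" where
  "fp_div p k i = (THE m. m < p \<and> [i * m = k] (mod p))"

definition Rn :: "nat \<Rightarrow> nat \<Rightarrow> nat set" where
  "Rn p n = {(x ^ n) mod p | x. 1 \<le> x \<and> x < p}"

definition yvec :: "nat \<Rightarrow> ('a::field \<Rightarrow> 'a) \<Rightarrow> 'a \<Rightarrow> 'a \<Rightarrow> nat \<Rightarrow> 'a" where
  "yvec p \<tau> \<zeta> \<alpha>' i = (\<Sum>k<p. (\<tau> ^^ k) \<alpha>' * \<zeta> powi (- (int i * int k)))"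

definition Pk :: "nat \<Rightarrow> nat \<Rightarrow> ('a::field \<Rightarrow> 'a) \<Rightarrow> 'a \<Rightarrow> 'a \<Rightarrow> nat \<Rightarrow> 'a" where
  "Pk p n \<tau> \<zeta> \<alpha>' k = (\<Prod>i\<in>Rn p n. yvec p \<tau> \<zeta> \<alpha>' i powi centred_rep p (int (fp_div p k i)))"

end

theory Submission
  imports Defs
begin

(*
  Each y_i is a Lagrange resolvent: shifting the summation index gives \<tau>(y_i) = \<zeta>^i y_i.
  Hence \<tau>^j multiplies P_k = \<Prod>_i y_i^c(i\<^sup>-\<^sup>1 k) by \<zeta> raised to j \<Sum>_i i c(i\<^sup>-\<^sup>1 k).
  Every summand is congruent to k mod p, and R_n, the subgroup of index n of the cyclic group
  of units mod p, has (p - 1)/n elements; so the exponent is j k (p - 1)/n mod p. The formula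
  for \<tau>^j(\<alpha>) follows by additivity.
*)

lemma centred_rep_cong:
  assumes "p > 0"
  shows "[centred_rep p x = x] (mod int p)"
proof -
  define P where "P = int p"
  have "P > 0" using assms by (simp add: P_def)
  define m where "m = x mod P"
  have m: "0 \<le> m" "m < P" "[m = x] (mod P)"
    using \<open>P > 0\<close> by (simp_all add: m_def cong_def)
  define r where "r = (if m \<le> (P - 1) div 2 then m else m - P)"
  have "[r = m] (mod P)" by (simp add: r_def cong_def)
  with m have r: "(1 - P) div 2 \<le> r \<and> r \<le> (P - 1) div 2 \<and> [r = x] (mod P)"
    unfolding r_def by (auto intro: cong_trans)
  have uniq: "r' = r" if "(1 - P) div 2 \<le> r' \<and> r' \<le> (P - 1) div 2 \<and> [r' = x] (mod P)" for r'
  proof -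
    have "[r' = r] (mod P)" using that r by (metis cong_sym cong_trans)
    moreover have "\<bar>r' - r\<bar> < P" using that r by auto
    ultimately have "r' - r = 0"
      using dvd_imp_le_int[of "r' - r" P] by (auto simp: cong_iff_dvd_diff)
    then show ?thesis by simp
  qed
  have "centred_rep p x = r"
    unfolding centred_rep_def P_def[symmetric] by (rule the_equality, fact r, erule uniq)
  with r show ?thesis by (simp add: P_def)
qed

lemma fp_div_cong:
  assumes "coprime i p" and "p > 0"
  shows "[i * fp_div p k i = k] (mod p)"
proof -
  obtain x where x: "[i * x = 1] (mod p)" using cong_solve_coprime_nat[OF assms(1)] by auto
  define m where "m = x * k mod p"
  have m: "m < p \<and> [i * m = k] (mod p)"
  proof
    show "m < p" using assms(2) by (simp add: m_def)
    have "[i * m = (i * x) * k] (mod p)"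
      unfolding m_def cong_def by (simp add: mod_mult_right_eq mult.assoc)
    also have "[(i * x) * k = 1 * k] (mod p)" using x by (rule cong_mult) simp
    finally show "[i * m = k] (mod p)" by simp
  qed
  have uniq: "m' = m" if "m' < p \<and> [i * m' = k] (mod p)" for m'
  proof -
    have "[i * m' = i * m] (mod p)" using that m by (metis cong_sym cong_trans)
    then have "[m' = m] (mod p)" using assms(1) by (metis cong_mult_lcancel_nat)
    then show ?thesis using that m cong_less_modulus_unique_nat by blast
  qed
  have "fp_div p k i = m" unfolding fp_div_def by (rule the_equality, fact m, erule uniq)
  with m show ?thesis by simp
qed

lemma Rn_subset:
  assumes "prime p"
  shows "Rn p n \<subseteq> {0<..<p}"
proof
  fix i assume "i \<in> Rn p n"
  then obtain x where x: "1 \<le> x" "x < p" "i = x ^ n mod p" unfolding Rn_def by blast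
  then have "\<not> p dvd x ^ n"
    using assms prime_dvd_power[of p x n] dvd_imp_le[of p x] by linarith
  with x show "i \<in> {0<..<p}" by (simp add: dvd_eq_mod_eq_0)
qed

lemma Rn_eq_primroot_powers:
  assumes "prime p" and "n dvd p - 1" and g: "residue_primroot p g"
  shows "Rn p n = (\<lambda>b. g ^ (b * n) mod p) ` {..<(p - 1) div n}"
proof -
  define q where "q = (p - 1) div n"
  have p1: "p > 1" using assms(1) prime_gt_1_nat by blast
  have qn: "q * n = p - 1" using assms(2) by (simp add: q_def)
  have gen: "bij_betw (\<lambda>i. g ^ i mod p) {..<p - 1} {0<..<p}"
    using residue_primroot_is_generator[OF p1 g] assms(1) by (simp add: totient_prime totatives_prime)
  have ord: "ord p g = q * n" "coprime p g"
    using g assms(1) qn by (simp_all add: residue_primroot_def totient_prime)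
  have red: "g ^ (a * n) mod p = g ^ ((a mod q) * n) mod p" for a
  proof -
    have "[a * n = (a mod q) * n] (mod ord p g)"
      unfolding ord cong_def by (simp add: mod_mult_mult2)
    then show ?thesis using order_divides_expdiff[OF ord(2)] by (simp add: cong_def)
  qed
  have "Rn p n = (\<lambda>a. g ^ (a * n) mod p) ` {..<p - 1}"
  proof -
    have "Rn p n = (\<lambda>x. x ^ n mod p) ` {0<..<p}" unfolding Rn_def by auto
    also have "{0<..<p} = (\<lambda>i. g ^ i mod p) ` {..<p - 1}"
      using gen by (simp add: bij_betw_def)
    finally show ?thesis by (simp add: image_image power_mod power_mult)
  qed
  also have "\<dots> = (\<lambda>b. g ^ (b * n) mod p) ` {..<q}"
  proof
    show "(\<lambda>a. g ^ (a * n) mod p) ` {..<p - 1} \<subseteq> (\<lambda>b. g ^ (b * n) mod p) ` {..<q}"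
    proof (rule image_subsetI)
      fix a
      have "q > 0" using qn p1 by (metis gr0I mult_zero_left zero_less_diff)
      then show "g ^ (a * n) mod p \<in> (\<lambda>b. g ^ (b * n) mod p) ` {..<q}"
        unfolding red[of a] by simp
    qed
    have "q \<le> p - 1" by (simp add: q_def)
    then show "(\<lambda>b. g ^ (b * n) mod p) ` {..<q} \<subseteq> (\<lambda>a. g ^ (a * n) mod p) ` {..<p - 1}"
      by (intro image_mono) auto
  qed
  finally show ?thesis unfolding q_def .
qed

lemma card_Rn:
  assumes "prime p" and "n dvd p - 1"
  shows "card (Rn p n) = (p - 1) div n"
proof -
  define q where "q = (p - 1) div n"
  have p1: "p > 1" using assms(1) prime_gt_1_nat by blast
  obtain g where g: "residue_primroot p g" using prime_primitive_root_exists[OF _ assms(1)] p1 by blast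
  have qn: "q * n = p - 1" using assms(2) by (simp add: q_def)
  have ord: "ord p g = q * n" "coprime p g"
    using g assms(1) qn by (simp_all add: residue_primroot_def totient_prime)
  have "inj_on (\<lambda>b. g ^ (b * n) mod p) {..<q}"
  proof (rule inj_onI)
    fix a b assume "a \<in> {..<q}" "b \<in> {..<q}" and "g ^ (a * n) mod p = g ^ (b * n) mod p"
    moreover have "n > 0" using qn p1 by (metis gr0I mult_0_right zero_less_diff)
    ultimately have "[a * n = b * n] (mod q * n)" "a * n < q * n" "b * n < q * n"
      using order_divides_expdiff[OF ord(2)] by (auto simp: cong_def ord(1))
    then show "a = b" using \<open>n > 0\<close> by (metis cong_less_modulus_unique_nat mult_right_cancel not_gr0)
  qed
  then show ?thesis
    unfolding Rn_eq_primroot_powers[OF assms g] q_def[symmetric] by (simp add: card_image)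
qed

lemma sum_Rn_centred_rep_cong:
  assumes "prime p" and "n dvd p - 1"
  shows "[(\<Sum>i\<in>Rn p n. int i * centred_rep p (int (fp_div p k i))) = int (k * ((p - 1) div n))]
           (mod int p)"
proof -
  have "[(\<Sum>i\<in>Rn p n. int i * centred_rep p (int (fp_div p k i))) = (\<Sum>i\<in>Rn p n. int k)] (mod int p)"
  proof (rule cong_sum)
    fix i assume "i \<in> Rn p n"
    then have "i \<in> {0<..<p}" using Rn_subset[OF assms(1)] by blast
    then have "0 < i" "i < p" by simp_all
    then have "coprime i p"
      using assms(1) by (metis coprime_commute prime_imp_coprime_nat nat_dvd_not_less)
    have "[int i * centred_rep p (int (fp_div p k i)) = int i * int (fp_div p k i)] (mod int p)"
      using \<open>i < p\<close> by (intro cong_mult cong_refl centred_rep_cong) simp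
    also have "[int i * int (fp_div p k i) = int k] (mod int p)"
      using fp_div_cong[OF \<open>coprime i p\<close>] \<open>i < p\<close> by (metis cong_int_iff of_nat_mult gr_implies_not0 not_gr0)
    finally show "[int i * centred_rep p (int (fp_div p k i)) = int k] (mod int p)" .
  qed
  also have "(\<Sum>i\<in>Rn p n. int k) = int (k * ((p - 1) div n))"
    using card_Rn[OF assms] by simp
  finally show ?thesis .
qed

definition field_hom :: "('a::field \<Rightarrow> 'a) \<Rightarrow> bool" where
  "field_hom f \<longleftrightarrow> (\<forall>x y. f (x + y) = f x + f y) \<and> (\<forall>x y. f (x * y) = f x * f y) \<and> f 1 = 1"

lemma field_homI_bij:
  assumes "bij f" and "\<And>x y. f (x + y) = f x + f y" and "\<And>x y. f (x * y) = f x * f y"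
  shows "field_hom f"
proof -
  obtain u where "f u = 1" using assms(1) by (metis bij_pointE)
  then have "f 1 = 1" using assms(3)[of 1 u] by simp
  with assms show ?thesis unfolding field_hom_def by blast
qed

lemma field_hom_add: "field_hom f \<Longrightarrow> f (x + y) = f x + f y"
  and field_hom_mult: "field_hom f \<Longrightarrow> f (x * y) = f x * f y"
  and field_hom_1: "field_hom f \<Longrightarrow> f 1 = 1"
  by (simp_all add: field_hom_def)

lemma field_hom_0: "field_hom f \<Longrightarrow> f 0 = 0"
  using field_hom_add[of f 0 0] by (metis add_0 add_cancel_right_right)

lemma field_hom_funpow: "field_hom f \<Longrightarrow> field_hom (f ^^ j)"
  by (induction j) (auto simp: field_hom_def)

lemma field_hom_sum: "field_hom f \<Longrightarrow> f (\<Sum>x\<in>A. g x) = (\<Sum>x\<in>A. f (g x))"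
  by (induction A rule: infinite_finite_induct) (simp_all add: field_hom_0 field_hom_add)

lemma field_hom_prod: "field_hom f \<Longrightarrow> f (\<Prod>x\<in>A. g x) = (\<Prod>x\<in>A. f (g x))"
  by (induction A rule: infinite_finite_induct) (simp_all add: field_hom_1 field_hom_mult)

lemma field_hom_power: "field_hom f \<Longrightarrow> f (x ^ m) = f x ^ m"
  by (induction m) (simp_all add: field_hom_1 field_hom_mult)

lemma field_hom_of_nat: "field_hom f \<Longrightarrow> f (of_nat m) = of_nat m"
  by (induction m) (simp_all add: field_hom_0 field_hom_1 field_hom_add)

lemma field_hom_inverse:
  assumes "field_hom f"
  shows "f (inverse x) = inverse (f x)"
proof (cases "x = 0")
  case True
  then show ?thesis using field_hom_0[OF assms] by simp
next
  case False
  then have "f x * f (inverse x) = 1"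
    using field_hom_mult[OF assms, of x "inverse x"] field_hom_1[OF assms] by simp
  then show ?thesis by (rule inverse_unique[symmetric])
qed

lemma field_hom_powi:
  assumes "field_hom f"
  shows "f (x powi e) = f x powi e"
proof (cases "e \<ge> 0")
  case True
  then obtain m where "e = int m" by (metis nonneg_int_cases)
  then show ?thesis using field_hom_power[OF assms] by simp
next
  case False
  then obtain m where "e = - int m" by (metis neg_int_cases not_le less_imp_le)
  then show ?thesis
    using field_hom_power[OF assms] field_hom_inverse[OF assms] by (simp add: power_int_minus)
qed

lemma power_int_sum:
  fixes c :: "'a::field"
  assumes "c \<noteq> 0"
  shows "c powi (\<Sum>a\<in>A. f a) = (\<Prod>a\<in>A. c powi f a)"
  using assms by (induction A rule: infinite_finite_induct) (simp_all add: power_int_add)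

lemma root_of_unity_powi_cong:
  fixes \<zeta> :: "'a::field"
  assumes "\<zeta> ^ p = 1" and "[a = b] (mod int p)"
  shows "\<zeta> powi a = \<zeta> powi b"
proof (cases "p = 0")
  case True
  then show ?thesis using assms(2) by simp
next
  case False
  then have "\<zeta> \<noteq> 0" using assms(1) by (metis power_0_left one_neq_zero)
  obtain t where "a = b + int p * t"
    using assms(2) by (metis cong_iff_dvd_diff dvdE diff_eq_eq add.commute)
  then have "\<zeta> powi a = \<zeta> powi b * (\<zeta> ^ p) powi t"
    using \<open>\<zeta> \<noteq> 0\<close> by (simp add: power_int_add power_int_mult)
  then show ?thesis using assms(1) by simp
qed

lemma yvec_eigenvector:
  assumes \<sigma>: "field_hom \<sigma>" and "p > 0" and "(\<sigma> ^^ p) a = a" and "\<sigma> \<zeta> = \<zeta>" and "\<zeta> ^ p = 1"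
  shows "\<sigma> (yvec p \<sigma> \<zeta> a i) = \<zeta> ^ i * yvec p \<sigma> \<zeta> a i"
proof -
  define g where "g k = (\<sigma> ^^ k) a * \<zeta> powi (- (int i * int k))" for k
  have "\<zeta> \<noteq> 0" using assms(2,5) by (metis power_0_left one_neq_zero not_gr0)
  have shift: "\<sigma> (g k) = \<zeta> ^ i * g (Suc k)" for k
  proof -
    have "\<zeta> powi int i * \<zeta> powi (- (int i * int (Suc k))) = \<zeta> powi (int i - int i * int (Suc k))"
      using power_int_add[of \<zeta> "int i" "- (int i * int (Suc k))"] \<open>\<zeta> \<noteq> 0\<close> by simp
    also have "int i - int i * int (Suc k) = - (int i * int k)" by (simp add: algebra_simps)
    finally have \<zeta>i: "\<zeta> powi (- (int i * int k)) = \<zeta> ^ i * \<zeta> powi (- (int i * int (Suc k)))"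
      by simp
    have "\<sigma> (g k) = (\<sigma> ^^ Suc k) a * \<zeta> powi (- (int i * int k))"
      unfolding g_def by (simp add: field_hom_mult[OF \<sigma>] field_hom_powi[OF \<sigma>] assms(4))
    then show ?thesis unfolding \<zeta>i g_def by (simp only: ac_simps)
  qed
  have "g p = g 0"
    using root_of_unity_powi_cong[OF assms(5), of "- (int i * int p)" 0] assms(3)
    by (simp add: g_def cong_iff_dvd_diff)
  then have cyclic: "(\<Sum>k<p. g (Suc k)) = (\<Sum>k<p. g k)"
    using sum.lessThan_Suc_shift[of g p] sum.lessThan_Suc[of g p] by simp
  have "\<sigma> (yvec p \<sigma> \<zeta> a i) = (\<Sum>k<p. \<zeta> ^ i * g (Suc k))"
    unfolding yvec_def g_def[symmetric] field_hom_sum[OF \<sigma>] shift ..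
  also have "\<dots> = \<zeta> ^ i * yvec p \<sigma> \<zeta> a i"
    unfolding yvec_def g_def[symmetric] sum_distrib_left[symmetric] cyclic ..
  finally show ?thesis .
qed

lemma funpow_eigenvector:
  assumes \<sigma>: "field_hom \<sigma>" and "\<sigma> c = c" and "\<sigma> x = c * x"
  shows "(\<sigma> ^^ j) x = c ^ j * x"
proof (induction j)
  case (Suc j)
  then show ?case using assms by (simp add: field_hom_mult[OF \<sigma>] field_hom_power[OF \<sigma>])
qed simp

lemma funpow_prod_powi_eigenvectors:
  assumes \<sigma>: "field_hom \<sigma>" and "\<sigma> \<zeta> = \<zeta>" and "\<zeta> \<noteq> 0"
    and eigen: "\<And>i. i \<in> A \<Longrightarrow> \<sigma> (y i) = \<zeta> ^ i * y i"
  shows "(\<sigma> ^^ j) (\<Prod>i\<in>A. y i powi e i)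
           = \<zeta> powi (int j * (\<Sum>i\<in>A. int i * e i)) * (\<Prod>i\<in>A. y i powi e i)"
proof -
  have \<sigma>j: "field_hom (\<sigma> ^^ j)" by (rule field_hom_funpow[OF \<sigma>])
  have "(\<sigma> ^^ j) (\<Prod>i\<in>A. y i powi e i) = (\<Prod>i\<in>A. ((\<zeta> ^ i) ^ j * y i) powi e i)"
    unfolding field_hom_prod[OF \<sigma>j] field_hom_powi[OF \<sigma>j]
    using funpow_eigenvector[OF \<sigma> _ eigen] assms(2) field_hom_power[OF \<sigma>]
    by (intro prod.cong) simp_all
  also have "\<dots> = (\<Prod>i\<in>A. \<zeta> powi (int j * (int i * e i))) * (\<Prod>i\<in>A. y i powi e i)"
    by (simp add: power_int_mult_distrib prod.distrib ac_simps flip: power_mult power_int_mult power_int_of_nat)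
  also have "\<dots> = \<zeta> powi (int j * (\<Sum>i\<in>A. int i * e i)) * (\<Prod>i\<in>A. y i powi e i)"
    using \<open>\<zeta> \<noteq> 0\<close> by (simp add: power_int_sum sum_distrib_left)
  finally show ?thesis .
qed

lemma funpow_Pk:
  assumes \<sigma>: "field_hom \<sigma>" and "prime p" and "n dvd p - 1"
    and "(\<sigma> ^^ p) a = a" and "\<sigma> \<zeta> = \<zeta>" and "\<zeta> ^ p = 1"
  shows "(\<sigma> ^^ j) (Pk p n \<sigma> \<zeta> a k) = \<zeta> ^ (j * k * (((p - 1) div n) mod p)) * Pk p n \<sigma> \<zeta> a k"
proof -
  have "p > 0" using assms(2) prime_gt_0_nat by blast
  then have "\<zeta> \<noteq> 0" using assms(6) by (auto simp: power_0_left)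
  have eigen: "\<sigma> (yvec p \<sigma> \<zeta> a i) = \<zeta> ^ i * yvec p \<sigma> \<zeta> a i" for i
    by (rule yvec_eigenvector[OF \<sigma> \<open>p > 0\<close> assms(4-6)])
  have "[int j * (\<Sum>i\<in>Rn p n. int i * centred_rep p (int (fp_div p k i)))
          = int j * int (k * ((p - 1) div n))] (mod int p)"
    by (intro cong_mult cong_refl sum_Rn_centred_rep_cong assms(2,3))
  also have "int j * int (k * ((p - 1) div n)) = int (j * k * ((p - 1) div n))"
    by simp
  also have "[\<dots> = int (j * k * (((p - 1) div n) mod p))] (mod int p)"
    unfolding cong_int_iff by (simp add: cong_def mod_mult_right_eq)
  finally have exponent:
    "[int j * (\<Sum>i\<in>Rn p n. int i * centred_rep p (int (fp_div p k i)))
       = int (j * k * (((p - 1) div n) mod p))] (mod int p)" .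
  show ?thesis
    unfolding Pk_def funpow_prod_powi_eigenvectors[OF \<sigma> assms(5) \<open>\<zeta> \<noteq> 0\<close> eigen]
      root_of_unity_powi_cong[OF assms(6) exponent] power_int_of_nat ..
qed

theorem proposition5p7:
  fixes p n :: nat and \<tau> :: "'a::field_char_0 \<Rightarrow> 'a" and \<zeta> \<alpha>' :: 'a
  assumes "prime p" and "p > 2"
    and "n dvd p - 1"
    and aut: "bij \<tau>" "\<And>x y. \<tau> (x + y) = \<tau> x + \<tau> y" "\<And>x y. \<tau> (x * y) = \<tau> x * \<tau> y"
    and order: "\<tau> ^^ p = id"
    and zeta: "\<zeta> ^ p = 1" "\<zeta> \<noteq> 1" "\<tau> \<zeta> = \<zeta>"
    and normal_basis: "\<And>c :: nat \<Rightarrow> 'a. (\<forall>k<p. \<tau> (c k) = c k) \<Longrightarrow>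
        (\<Sum>k<p. c k * (\<tau> ^^ k) \<alpha>') = 0 \<Longrightarrow> \<forall>k<p. c k = 0"
  shows "(\<forall>j<p. \<forall>k<p. (\<tau> ^^ j) (Pk p n \<tau> \<zeta> \<alpha>' k)
            = \<zeta> ^ (j * k * (((p - 1) div n) mod p)) * Pk p n \<tau> \<zeta> \<alpha>' k)
       \<and> (\<forall>j<p. (\<tau> ^^ j) ((1 / of_nat p) * (\<Sum>k<p. Pk p n \<tau> \<zeta> \<alpha>' k))
            = (1 / of_nat p) * (\<Sum>k<p. \<zeta> ^ (j * k * (((p - 1) div n) mod p)) * Pk p n \<tau> \<zeta> \<alpha>' k))"
proof -
  have \<tau>: "field_hom \<tau>" by (rule field_homI_bij[OF aut])
  have Pk: "(\<tau> ^^ j) (Pk p n \<tau> \<zeta> \<alpha>' k)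
              = \<zeta> ^ (j * k * (((p - 1) div n) mod p)) * Pk p n \<tau> \<zeta> \<alpha>' k" for j k
    using funpow_Pk[OF \<tau> assms(1,3) _ zeta(3,1)] order by simp
  show ?thesis
  proof (intro conjI allI impI)
    fix j k
    show "(\<tau> ^^ j) (Pk p n \<tau> \<zeta> \<alpha>' k)
            = \<zeta> ^ (j * k * (((p - 1) div n) mod p)) * Pk p n \<tau> \<zeta> \<alpha>' k" by (rule Pk)
  next
    fix j
    have \<tau>j: "field_hom (\<tau> ^^ j)" by (rule field_hom_funpow[OF \<tau>])
    then have "(\<tau> ^^ j) (1 / of_nat p) = 1 / of_nat p"
      by (simp add: divide_inverse field_hom_inverse field_hom_of_nat)
    then show "(\<tau> ^^ j) ((1 / of_nat p) * (\<Sum>k<p. Pk p n \<tau> \<zeta> \<alpha>' k))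
            = (1 / of_nat p) * (\<Sum>k<p. \<zeta> ^ (j * k * (((p - 1) div n) mod p)) * Pk p n \<tau> \<zeta> \<alpha>' k)"
      unfolding field_hom_mult[OF \<tau>j] field_hom_sum[OF \<tau>j] Pk by simp
  qed
qed

end
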